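(* Let $n$ be odd, let $A$ be a finite set of alternatives, and let $P=(P_1,\ldots,P_n)$ be a profile of linear orders on $A$ held by voters $V=\{1,\ldots,n\}$. If $P$ is single-crossing with respect to a tree $T=(V,E)$ whose vertex set is the set of voters, then there exists $i\in\{1,\ldots,n\}$ such that the preference order $P_i$ coincides with the majority relation of $P$.
   Context: A profile is an $n$-tuple of (strict) linear orders on $A$; voter $i$ prefers $a$ to $b$, written $a\succ_i b$, if $aP_ib$. The majority relation of $P$: $a\succeq b$ iff $|\{i: a\succ_i b\}|\ge|\{i: b\succ_i a\}|$; for $n$ odd this is a complete asymmetric relation, with $a\succ b$ iff a strict majority of voters prefers $a$ to $b$. Given a tree $T=(V,E)$ on the voter set, $P$ is single-crossing with respect to $T$ if for every pair of distinct alternatives $a,b\in A$ one of the following holds: (i) there is an edge $e\in E$ (an "$ab$-cut") such that, removing $e$ from $T$, the two resulting subtrees have vertex sets $V_1,V_2$ with all voters in $V_1$ preferring $a$ to $b$ and all voters in $V_2$ preferring $b$ to $a$; or (ii) all voters prefer $a$ to $b$, or all voters prefer $b$ to $a$ (a "virtual" cut). *)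

theory Defs
  imports Main
begin

definition ugraph :: "'v set \<Rightarrow> 'v set set \<Rightarrow> bool" where
  "ugraph V E \<longleftrightarrow> (\<forall>e\<in>E. \<exists>u v. e = {u, v} \<and> u \<noteq> v \<and> u \<in> V \<and> v \<in> V)"

definition adj :: "'v set set \<Rightarrow> ('v \<times> 'v) set" where
  "adj E = {(u, v). {u, v} \<in> E}"

definition connected_graph :: "'v set \<Rightarrow> 'v set set \<Rightarrow> bool" where
  "connected_graph V E \<longleftrightarrow> (\<forall>u\<in>V. \<forall>v\<in>V. (u, v) \<in> (adj E)\<^sup>*)"

definition is_cycle :: "'v set set \<Rightarrow> 'v list \<Rightarrow> bool" where
  "is_cycle E cs \<longleftrightarrow> length cs \<ge> 3 \<and> distinct cs
     \<and> (\<forall>k. Suc k < length cs \<longrightarrow> {cs ! k, cs ! Suc k} \<in> E)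
     \<and> {last cs, hd cs} \<in> E"

definition is_tree :: "'v set \<Rightarrow> 'v set set \<Rightarrow> bool" where
  "is_tree V E \<longleftrightarrow> ugraph V E \<and> V \<noteq> {} \<and> connected_graph V E \<and> (\<nexists>cs. is_cycle E cs)"

definition linear_order_on_A :: "'a set \<Rightarrow> 'a rel \<Rightarrow> bool" where
  "linear_order_on_A A r \<longleftrightarrow> r \<subseteq> A \<times> A \<and> strict_linear_order_on A r"

definition maj_weak :: "nat set \<Rightarrow> (nat \<Rightarrow> 'a rel) \<Rightarrow> 'a \<Rightarrow> 'a \<Rightarrow> bool" where
  "maj_weak V P a b \<longleftrightarrow> card {i\<in>V. (a, b) \<in> P i} \<ge> card {i\<in>V. (b, a) \<in> P i}"

definition ab_cut :: "nat set \<Rightarrow> nat set set \<Rightarrow> (nat \<Rightarrow> 'a rel) \<Rightarrow> 'a \<Rightarrow> 'a \<Rightarrow> nat set \<Rightarrow> bool" where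
  "ab_cut V E P a b e \<longleftrightarrow> e \<in> E \<and> (\<exists>u v. e = {u, v} \<and>
     (\<forall>i\<in>V. (u, i) \<in> (adj (E - {e}))\<^sup>* \<longrightarrow> (a, b) \<in> P i) \<and>
     (\<forall>i\<in>V. (v, i) \<in> (adj (E - {e}))\<^sup>* \<longrightarrow> (b, a) \<in> P i))"

definition single_crossing :: "'a set \<Rightarrow> nat set \<Rightarrow> nat set set \<Rightarrow> (nat \<Rightarrow> 'a rel) \<Rightarrow> bool" where
  "single_crossing A V E P \<longleftrightarrow> (\<forall>a\<in>A. \<forall>b\<in>A. a \<noteq> b \<longrightarrow>
     (\<exists>e\<in>E. ab_cut V E P a b e) \<or> (\<forall>i\<in>V. (a, b) \<in> P i) \<or> (\<forall>i\<in>V. (b, a) \<in> P i))"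

end

theory Submission
  imports Defs
begin

text \<open>
  Removing an edge \<open>e = {u, v}\<close> splits a tree into the side of \<open>u\<close> and the side of \<open>v\<close>.
  When the number of voters is odd, one side of every edge is a strict majority, and a
  tree has a centroid: a voter lying on the majority side of every edge. Single-crossingness
  makes each side of an \<open>ab\<close>-cut unanimous about \<open>a\<close> versus \<open>b\<close>, so the centroid always
  sits in a unanimous strict majority and hence votes with the majority on every pair.
\<close>

lemma rtrancl_imp_distinct_path:
  assumes "(x, y) \<in> r\<^sup>*"
  shows "\<exists>xs. xs \<noteq> [] \<and> hd xs = x \<and> last xs = y \<and> distinct xs \<and>
           (\<forall>k. Suc k < length xs \<longrightarrow> (xs ! k, xs ! Suc k) \<in> r)"
  using assms
proof (induction rule: rtrancl_induct)
  case base
  show ?case by (intro exI[of _ "[x]"]) auto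
next
  case (step y z)
  then obtain xs where xs: "xs \<noteq> []" "hd xs = x" "last xs = y" "distinct xs"
    "\<forall>k. Suc k < length xs \<longrightarrow> (xs ! k, xs ! Suc k) \<in> r" by blast
  show ?case
  proof (cases "z \<in> set xs")
    case True
    then obtain i where i: "i < length xs" "xs ! i = z" by (meson in_set_conv_nth)
    have "last (take (Suc i) xs) = z" using i by (simp add: take_Suc_conv_app_nth)
    then show ?thesis
      using xs i by (intro exI[of _ "take (Suc i) xs"]) (auto simp: hd_take)
  next
    case False
    have "((xs @ [z]) ! k, (xs @ [z]) ! Suc k) \<in> r" if k: "Suc k < length (xs @ [z])" for k
    proof (cases "Suc k < length xs")
      case True
      then show ?thesis using xs(5) by (simp add: nth_append)
    next
      case False
      then have "k = length xs - 1" using k by simp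
      then show ?thesis using xs(1,3) step(2) by (simp add: nth_append last_conv_nth)
    qed
    then show ?thesis using xs False by (intro exI[of _ "xs @ [z]"]) auto
  qed
qed

lemma adj_sym: "(x, y) \<in> adj F \<Longrightarrow> (y, x) \<in> adj F"
  unfolding adj_def by (auto simp: insert_commute)

lemma adj_rtrancl_sym: "(x, y) \<in> (adj F)\<^sup>* \<Longrightarrow> (y, x) \<in> (adj F)\<^sup>*"
  by (induction rule: rtrancl_induct) (auto intro: adj_sym converse_rtrancl_into_rtrancl)

lemma tree_edge_endpoints:
  assumes "is_tree V E" "e \<in> E" "p \<in> e"
  obtains q where "e = {p, q}" "p \<noteq> q" "p \<in> V" "q \<in> V"
proof -
  obtain u v where "e = {u, v}" "u \<noteq> v" "u \<in> V" "v \<in> V"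
    using assms(1,2) unfolding is_tree_def ugraph_def by blast
  then show thesis using that assms(3) by (auto simp: insert_commute)
qed

lemma tree_edge_is_bridge:
  assumes tree: "is_tree V E" and e: "{u, v} \<in> E" and uv: "u \<noteq> v"
  shows "(u, v) \<notin> (adj (E - {{u, v}}))\<^sup>*"
proof
  assume "(u, v) \<in> (adj (E - {{u, v}}))\<^sup>*"
  then obtain xs where xs: "xs \<noteq> []" "hd xs = u" "last xs = v" "distinct xs"
    and steps: "\<forall>k. Suc k < length xs \<longrightarrow> (xs ! k, xs ! Suc k) \<in> adj (E - {{u, v}})"
    using rtrancl_imp_distinct_path by metis
  have "length xs \<noteq> 1"
    using xs uv by (auto simp: length_Suc_conv)
  moreover have "length xs \<noteq> 2"
  proof
    assume "length xs = 2"
    then have "xs = [u, v]" using xs(2,3) by (auto simp: numeral_2_eq_2 length_Suc_conv)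
    then show False using steps unfolding adj_def by auto
  qed
  moreover have "length xs \<noteq> 0" using xs(1) by simp
  ultimately have "3 \<le> length xs" by linarith
  then have "is_cycle E xs"
    using xs e steps unfolding is_cycle_def adj_def by (auto simp: insert_commute)
  then show False using tree unfolding is_tree_def by blast
qed

definition side :: "nat set \<Rightarrow> nat set set \<Rightarrow> nat set \<Rightarrow> nat \<Rightarrow> nat set" where
  "side V E e p = {i \<in> V. (p, i) \<in> (adj (E - {e}))\<^sup>*}"

lemma side_subset: "side V E e p \<subseteq> V"
  unfolding side_def by blast

lemma self_in_side: "p \<in> V \<Longrightarrow> p \<in> side V E e p"
  unfolding side_def by simp

lemma side_subset_side_of_mem: "i \<in> side V E e j \<Longrightarrow> side V E e i \<subseteq> side V E e j"
  unfolding side_def by (auto intro: rtrancl_trans)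

lemma side_eq_side_of_mem: "i \<in> side V E e j \<Longrightarrow> j \<in> V \<Longrightarrow> side V E e i = side V E e j"
  using side_subset_side_of_mem[of i V E e j] side_subset_side_of_mem[of j V E e i]
  unfolding side_def by (auto intro: adj_rtrancl_sym)

lemma rtrancl_adj_split_edge:
  assumes "(u, i) \<in> (adj E)\<^sup>*" "e = {u, v}"
  shows "(u, i) \<in> (adj (E - {e}))\<^sup>* \<or> (v, i) \<in> (adj (E - {e}))\<^sup>*"
  using assms(1)
proof (induction rule: rtrancl_induct)
  case (step j k)
  show ?case
  proof (cases "{j, k} = e")
    case True
    then show ?thesis using assms(2) by (auto simp: doubleton_eq_iff)
  next
    case False
    then have "(j, k) \<in> adj (E - {e})" using step(2) unfolding adj_def by auto
    then show ?thesis using step(3) by (meson rtrancl_into_rtrancl)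
  qed
qed simp

lemma sides_cover:
  assumes "is_tree V E" "e = {p, q}" "p \<in> V"
  shows "side V E e p \<union> side V E e q = V"
  using assms rtrancl_adj_split_edge[of p _ E e q]
  unfolding is_tree_def connected_graph_def side_def by blast

lemma sides_disjoint:
  assumes tree: "is_tree V E" and "e \<in> E" "e = {p, q}" "p \<noteq> q"
  shows "side V E e p \<inter> side V E e q = {}"
proof (rule ccontr)
  assume "side V E e p \<inter> side V E e q \<noteq> {}"
  then have "(p, q) \<in> (adj (E - {e}))\<^sup>*"
    unfolding side_def by (blast intro: adj_rtrancl_sym rtrancl_trans)
  then show False using tree_edge_is_bridge[OF tree] assms(2-4) by blast
qed

lemma card_sides:
  assumes "is_tree V E" "finite V" "e \<in> E" "e = {p, q}" "p \<noteq> q" "p \<in> V"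
  shows "card (side V E e p) + card (side V E e q) = card V"
  using card_Un_disjoint[OF finite_subset[OF side_subset] finite_subset[OF side_subset]]
    sides_cover[OF assms(1,4,6)] sides_disjoint[OF assms(1,3-5)] assms(2) by metis

text \<open>A walk avoiding both endpoints of \<open>f\<close> survives the removal of \<open>f\<close>.\<close>

lemma side_subset_side_of_avoided_edge:
  assumes "u \<in> V" "v \<in> V" "u \<notin> side V E e q" "v \<notin> side V E e q"
  shows "side V E e q \<subseteq> side V E {u, v} q"
proof
  fix z assume z: "z \<in> side V E e q"
  have avoids: "j \<notin> {u, v}" if "(q, j) \<in> (adj (E - {e}))\<^sup>*" for j
    using that assms unfolding side_def by auto
  have "(q, z) \<in> (adj (E - {e}))\<^sup>*" using z unfolding side_def by simp
  then have "(q, z) \<in> (adj (E - {{u, v}}))\<^sup>*"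
  proof (induction rule: rtrancl_induct)
    case (step j k)
    have "{j, k} \<noteq> {u, v}"
      using avoids step(1) avoids[OF rtrancl_into_rtrancl[OF step(1,2)]] by auto
    then have "(j, k) \<in> adj (E - {{u, v}})" using step(2) unfolding adj_def by auto
    then show ?case using step.IH by (meson rtrancl_into_rtrancl)
  qed simp
  then show "z \<in> side V E {u, v} q" using z unfolding side_def by auto
qed

section \<open>A centroid of a tree with an odd number of vertices\<close>

definition heavy_half_edge :: "nat set \<Rightarrow> nat set set \<Rightarrow> nat set \<Rightarrow> nat \<Rightarrow> bool" where
  "heavy_half_edge V E e p \<longleftrightarrow> e \<in> E \<and> p \<in> e \<and> card V < 2 * card (side V E e p)"

lemma heavy_half_edge_exists:
  assumes tree: "is_tree V E" and "finite V" "odd (card V)" "e \<in> E" "e = {p, q}" "p \<noteq> q" "p \<in> V"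
  shows "heavy_half_edge V E e p \<or> heavy_half_edge V E e q"
proof -
  have "card V < 2 * card (side V E e p) \<or> card V < 2 * card (side V E e q)"
    using card_sides[OF tree assms(2,4-7)] assms(3) by presburger
  then show ?thesis using assms(4,5) unfolding heavy_half_edge_def by auto
qed

lemma tree_edge_orient:
  assumes tree: "is_tree V E" and e: "e \<in> E" and u: "u \<in> V"
  obtains p q where "e = {p, q}" "p \<noteq> q" "p \<in> V" "q \<in> V"
    "side V E e u = side V E e p" "u \<notin> side V E e q"
proof -
  obtain x y where xy: "e = {x, y}" "x \<noteq> y" "x \<in> V" "y \<in> V"
    using tree e unfolding is_tree_def ugraph_def by blast
  have disjoint: "side V E e x \<inter> side V E e y = {}" using sides_disjoint[OF tree e xy(1,2)] .
  have "u \<in> side V E e x \<or> u \<in> side V E e y"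
    using sides_cover[OF tree xy(1,3)] u by blast
  then show thesis
  proof
    assume "u \<in> side V E e x"
    then show thesis using that[of x y] xy side_eq_side_of_mem[of u V E e x] disjoint by blast
  next
    assume "u \<in> side V E e y"
    moreover have "e = {y, x}" using xy(1) by (simp add: insert_commute)
    ultimately show thesis using that[of y x] xy side_eq_side_of_mem[of u V E e y] disjoint by blast
  qed
qed

text \<open>
  A light side of \<open>u\<close> at an edge \<open>e\<close> would make the far side of \<open>e\<close> a heavy side contained
  either strictly in the side of \<open>u\<close> at \<open>f = {u, v}\<close> or in the light side of \<open>v\<close> at \<open>f\<close>.
\<close>

lemma least_heavy_half_edge_centroid:
  assumes tree: "is_tree V E" and fin: "finite V" and odd: "odd (card V)"
    and fu: "heavy_half_edge V E f u"
    and least: "\<And>e p. heavy_half_edge V E e p \<Longrightarrow> card (side V E f u) \<le> card (side V E e p)"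
    and e: "e \<in> E"
  shows "card V < 2 * card (side V E e u)"
proof (rule ccontr)
  assume light: "\<not> card V < 2 * card (side V E e u)"
  have "f \<in> E" "u \<in> f" using fu unfolding heavy_half_edge_def by auto
  then obtain v where f: "f \<in> E" "f = {u, v}" "u \<noteq> v" "u \<in> V" "v \<in> V"
    using tree_edge_endpoints[OF tree] by blast
  obtain p q where pq: "e = {p, q}" "p \<noteq> q" "p \<in> V" "q \<in> V"
    and side_u: "side V E e u = side V E e p" and u_not_q: "u \<notin> side V E e q"
    using tree_edge_orient[OF tree e f(4)] .
  have heavy_q: "heavy_half_edge V E e q"
    using heavy_half_edge_exists[OF tree fin odd e pq(1-3)] light side_u
    unfolding heavy_half_edge_def by auto
  have "e \<noteq> f" using fu light unfolding heavy_half_edge_def by auto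
  then have "(u, v) \<in> adj (E - {e})" using f unfolding adj_def by auto
  then have "v \<in> side V E e p" using f(5) side_u unfolding side_def by auto
  then have v_not_q: "v \<notin> side V E e q" using sides_disjoint[OF tree e pq(1,2)] by auto
  have sub: "side V E e q \<subseteq> side V E f q"
    using side_subset_side_of_avoided_edge[OF f(4,5) u_not_q v_not_q] f(2) by simp
  have "q \<in> side V E f u \<union> side V E f v" using sides_cover[OF tree f(2,4)] pq(4) by blast
  then show False
  proof
    assume "q \<in> side V E f u"
    then have "side V E f q = side V E f u" using side_eq_side_of_mem f(4) by blast
    then have "side V E e q \<subset> side V E f u"
      using sub self_in_side[OF f(4)] u_not_q by blast
    then have "card (side V E e q) < card (side V E f u)"
      using psubset_card_mono[OF finite_subset[OF side_subset fin]] by blast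
    then show False using least[OF heavy_q] by simp
  next
    assume "q \<in> side V E f v"
    then have "side V E e q \<subseteq> side V E f v"
      using sub side_eq_side_of_mem[of q V E f v] f(5) by blast
    then have "card (side V E e q) \<le> card (side V E f v)"
      using card_mono[OF finite_subset[OF side_subset fin]] by blast
    then show False
      using heavy_q fu card_sides[OF tree fin f(1-4)] unfolding heavy_half_edge_def by linarith
  qed
qed

lemma tree_has_centroid:
  assumes tree: "is_tree V E" and fin: "finite V" and odd: "odd (card V)"
  shows "\<exists>c\<in>V. \<forall>e\<in>E. card V < 2 * card (side V E e c)"
proof (cases "E = {}")
  case True
  then show ?thesis using tree unfolding is_tree_def by auto
next
  case False
  then obtain e0 p0 where e0: "e0 \<in> E" "p0 \<in> e0"
    using tree unfolding is_tree_def ugraph_def by blast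
  then obtain q0 where "e0 = {p0, q0}" "p0 \<noteq> q0" "p0 \<in> V"
    using tree_edge_endpoints[OF tree] by blast
  then have "heavy_half_edge V E e0 p0 \<or> heavy_half_edge V E e0 q0"
    by (rule heavy_half_edge_exists[OF tree fin odd e0(1)])
  then obtain e1 p1 where "heavy_half_edge V E e1 p1" by blast
  then obtain f u where fu: "heavy_half_edge V E f u"
    and least: "\<And>e p. heavy_half_edge V E e p \<Longrightarrow> card (side V E f u) \<le> card (side V E e p)"
    using ex_has_least_nat[of "\<lambda>(e, p). heavy_half_edge V E e p" "(e1, p1)"
        "\<lambda>(e, p). card (side V E e p)"] by (simp add: split_paired_all split_paired_All) blast
  have "f \<in> E" "u \<in> f" using fu unfolding heavy_half_edge_def by auto
  then have "u \<in> V" using tree_edge_endpoints[OF tree] by blast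
  then show ?thesis
    using least_heavy_half_edge_centroid[OF tree fin odd fu least] by blast
qed

lemma ab_cut_side_unanimous:
  assumes tree: "is_tree V E" and "c \<in> V" and cut: "ab_cut V E P a b e"
  shows "(\<forall>i\<in>side V E e c. (a, b) \<in> P i) \<or> (\<forall>i\<in>side V E e c. (b, a) \<in> P i)"
proof -
  obtain u v where e: "e \<in> E" "e = {u, v}"
    and "\<forall>i\<in>V. (u, i) \<in> (adj (E - {e}))\<^sup>* \<longrightarrow> (a, b) \<in> P i"
    and "\<forall>i\<in>V. (v, i) \<in> (adj (E - {e}))\<^sup>* \<longrightarrow> (b, a) \<in> P i"
    using cut unfolding ab_cut_def by blast
  then have sides: "\<forall>i\<in>side V E e u. (a, b) \<in> P i" "\<forall>i\<in>side V E e v. (b, a) \<in> P i"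
    unfolding side_def by auto
  have "u \<in> V" using tree_edge_endpoints[OF tree e(1)] e(2) by blast
  then have "c \<in> side V E e u \<or> c \<in> side V E e v"
    using sides_cover[OF tree e(2)] \<open>c \<in> V\<close> by blast
  then show ?thesis
    using sides side_subset_side_of_mem[of c V E e u] side_subset_side_of_mem[of c V E e v] by blast
qed

lemma strict_majority_prefers:
  assumes fin: "finite V" and S: "S \<subseteq> V" "card V < 2 * card S"
    and asym: "\<forall>i\<in>V. asym (P i)" and ab: "\<forall>i\<in>S. (a, b) \<in> P i"
  shows "card {i \<in> V. (b, a) \<in> P i} < card {i \<in> V. (a, b) \<in> P i}"
proof -
  have "{i \<in> V. (b, a) \<in> P i} \<subseteq> V - S" using asym ab by (auto dest: asymD)
  then have "card {i \<in> V. (b, a) \<in> P i} \<le> card (V - S)" using fin by (intro card_mono) auto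
  also have "\<dots> = card V - card S" using card_Diff_subset[OF finite_subset[OF S(1) fin] S(1)] .
  finally have "card {i \<in> V. (b, a) \<in> P i} \<le> card V - card S" .
  moreover have "card S \<le> card {i \<in> V. (a, b) \<in> P i}" using fin S(1) ab by (intro card_mono) auto
  ultimately show ?thesis using S(2) by linarith
qed

lemma member_of_unanimous_majority_agrees:
  assumes "finite V" "S \<subseteq> V" "card V < 2 * card S" "\<forall>i\<in>V. asym (P i)" "c \<in> S"
    and "(\<forall>i\<in>S. (a, b) \<in> P i) \<or> (\<forall>i\<in>S. (b, a) \<in> P i)"
  shows "(a, b) \<in> P c \<longleftrightarrow> maj_weak V P a b"
  using assms(6)
proof
  assume ab: "\<forall>i\<in>S. (a, b) \<in> P i"
  then show ?thesis
    using strict_majority_prefers[OF assms(1-4) ab] assms(5) unfolding maj_weak_def by simp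
next
  assume ba: "\<forall>i\<in>S. (b, a) \<in> P i"
  then have "(a, b) \<notin> P c" using assms(2,4,5) by (auto dest: asymD)
  then show ?thesis
    using strict_majority_prefers[OF assms(1-4) ba] unfolding maj_weak_def by simp
qed

theorem theorem1:
  fixes n :: nat and A :: "'a set" and P :: "nat \<Rightarrow> 'a rel" and E :: "nat set set"
  assumes "odd n"
    and "finite A"
    and "\<forall>i\<in>{1..n}. linear_order_on_A A (P i)"
    and "is_tree {1..n} E"
    and "single_crossing A {1..n} E P"
  shows "\<exists>i\<in>{1..n}. \<forall>a\<in>A. \<forall>b\<in>A. a \<noteq> b \<longrightarrow> ((a, b) \<in> P i \<longleftrightarrow> maj_weak {1..n} P a b)"
proof -
  let ?V = "{1..n}"
  obtain c where c: "c \<in> ?V" and centroid: "\<forall>e\<in>E. n < 2 * card (side ?V E e c)"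
    using tree_has_centroid[OF assms(4)] assms(1) by auto
  have asym: "\<forall>i\<in>?V. asym (P i)"
    using assms(3) asym_on_iff_irrefl_on_if_trans_on
    unfolding linear_order_on_A_def strict_linear_order_on_def by blast
  have "(a, b) \<in> P c \<longleftrightarrow> maj_weak ?V P a b" if "a \<in> A" "b \<in> A" "a \<noteq> b" for a b
  proof -
    have "(\<exists>e\<in>E. ab_cut ?V E P a b e) \<or> (\<forall>i\<in>?V. (a, b) \<in> P i) \<or> (\<forall>i\<in>?V. (b, a) \<in> P i)"
      using assms(5) that unfolding single_crossing_def by blast
    then show ?thesis
    proof (elim disjE bexE)
      fix e assume e: "e \<in> E" and cut: "ab_cut ?V E P a b e"
      show ?thesis
        using member_of_unanimous_majority_agrees[OF _ side_subset _ asym self_in_side[OF c]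
            ab_cut_side_unanimous[OF assms(4) c cut]] centroid e by simp
    qed (use member_of_unanimous_majority_agrees[OF _ order_refl _ asym c] c in auto)
  qed
  then show ?thesis using c by blast
qed

end
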